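(* Let $r \geq 2$ and let $1 \leq t \leq k_1 \leq k_2 \leq \cdots \leq k_r$ be integers. There exists $n_0(k_{r-1},k_r,t)$, depending only on $k_{r-1}, k_r, t$, such that the following holds for all integers $n \geq n_0(k_{r-1},k_r,t)$ (with $k_r \leq n$). Let $\mathcal{F}_1, \mathcal{F}_2, \dots, \mathcal{F}_r$ be families of subsets of $[n]=\{1,\dots,n\}$ such that every member of $\mathcal{F}_i$ has size at most $k_i$, for each $i$. Suppose that for all $i, j \in \{1,\dots,r\}$, every $A \in \mathcal{F}_i$ and $B \in \mathcal{F}_j$ with $|A \cap B| < t$ satisfy $|A \triangle B| \leq \min\{k_i,k_j\} - t$. Then $$\prod_{i=1}^r |\mathcal{F}_i| \leq \prod_{i=1}^r \left( \sum_{j=0}^{k_i - t} \binom{n-t}{k_i - t - j} \right).$$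
   Context: $A \triangle B$ denotes the symmetric difference $(A\setminus B)\cup(B\setminus A)$. *)

theory Defs
  imports Main
begin

definition symdiff :: "'a set \<Rightarrow> 'a set \<Rightarrow> 'a set" where
  "symdiff A B = (A - B) \<union> (B - A)"

end

theory Submission
  imports Defs Complex_Main
begin

text \<open>Taking \<open>i = j\<close> in the hypothesis, each family \<open>F\<^sub>i\<close> on its own satisfies the
one-family condition with \<open>k = k\<^sub>i\<close>, so it suffices to bound a single family \<open>F\<close> of sets of
size at most \<open>k\<close>. If \<open>k \<le> t\<close>, the condition forces \<open>|F| \<le> 1\<close>. If all members of \<open>F\<close>
contain a common \<open>t\<close>-set \<open>T\<close>, then \<open>F\<close> lies in the star of \<open>T\<close>, whose size is exactly the
right-hand side. Otherwise \<open>F\<close> is small: members of equal size \<open>s < k\<close> differ from a fixed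
one in at most \<open>k - t - 1\<close> points, and members of size \<open>k\<close> pairwise share \<open>t\<close> points, so a
member avoiding their common \<open>t\<close>-set pins down one more point. Either way each of the \<open>k + 1\<close>
size classes has \<open>O(n\<^sup>k\<^sup>-\<^sup>t\<^sup>-\<^sup>1)\<close> members, and the total is below \<open>C(n - t, k - t)\<close> once \<open>n\<close> is large.\<close>

lemma card_symdiff_add_card_Int:
  assumes "finite A" "finite B"
  shows "card (symdiff A B) + 2 * card (A \<inter> B) = card A + card B"
proof -
  have "card (symdiff A B) = card (A - B) + card (B - A)"
    unfolding symdiff_def using assms by (subst card_Un_disjoint) auto
  moreover have "card (A - B) + card (A \<inter> B) = card A" "card (B - A) + card (A \<inter> B) = card B"
    using assms by (simp_all add: card_Diff_subset_Int Int_commute card_mono)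
  ultimately show ?thesis by linarith
qed

lemma card_UN_le_card_mult:
  assumes "finite I" "\<And>i. i \<in> I \<Longrightarrow> card (A i) \<le> b"
  shows "card (\<Union>i\<in>I. A i) \<le> card I * b"
  using card_UN_le[OF assms(1), of A] sum_bounded_above[of I "\<lambda>i. card (A i)" b] assms(2)
  by simp

lemma binomial_le_power: "(n::nat) choose j \<le> n ^ j"
  by (cases "j \<le> n") (auto simp: binomial_le_pow binomial_eq_0)

lemma card_subsets_card_le:
  assumes "finite D"
  shows "card {S. S \<subseteq> D \<and> card S \<le> j} = (\<Sum>i\<le>j. card D choose i)"
proof -
  have "{S. S \<subseteq> D \<and> card S \<le> j} = (\<Union>i\<le>j. {S. S \<subseteq> D \<and> card S = i})"
    by auto
  also have "card \<dots> = (\<Sum>i\<le>j. card {S. S \<subseteq> D \<and> card S = i})"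
    using assms by (subst card_UN_disjoint) (auto intro: finite_subset[of _ "Pow D"])
  finally show ?thesis
    using assms by (simp add: n_subsets)
qed

lemma sum_binomial_le_power:
  assumes "1 \<le> (n::nat)"
  shows "(\<Sum>i\<le>j. n choose i) \<le> (j + 1) * n ^ j"
proof -
  have "(\<Sum>i\<le>j. n choose i) \<le> (\<Sum>i\<le>j. n ^ j)"
    using assms by (intro sum_mono order.trans[OF binomial_le_power] power_increasing) auto
  then show ?thesis by simp
qed

lemma card_supersets_card_le:
  assumes "finite D" "T \<subseteq> D" "card T \<le> k"
  shows "card {X. T \<subseteq> X \<and> X \<subseteq> D \<and> card X \<le> k}
           = (\<Sum>i\<le>k - card T. (card D - card T) choose i)"
proof -
  have fin_T: "finite T" using assms finite_subset by blast
  have "bij_betw (\<lambda>X. X - T) {X. T \<subseteq> X \<and> X \<subseteq> D \<and> card X \<le> k}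
          {S. S \<subseteq> D - T \<and> card S \<le> k - card T}"
  proof (rule bij_betw_byWitness[where f' = "\<lambda>S. S \<union> T"])
    show "(\<lambda>X. X - T) ` {X. T \<subseteq> X \<and> X \<subseteq> D \<and> card X \<le> k}
            \<subseteq> {S. S \<subseteq> D - T \<and> card S \<le> k - card T}"
      using fin_T by (auto simp: card_Diff_subset)
    show "(\<lambda>S. S \<union> T) ` {S. S \<subseteq> D - T \<and> card S \<le> k - card T}
            \<subseteq> {X. T \<subseteq> X \<and> X \<subseteq> D \<and> card X \<le> k}"
      using assms by (auto intro: order.trans[OF card_Un_le])
  qed auto
  then have "card {X. T \<subseteq> X \<and> X \<subseteq> D \<and> card X \<le> k} = card {S. S \<subseteq> D - T \<and> card S \<le> k - card T}"
    by (rule bij_betw_same_card)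
  also have "\<dots> = (\<Sum>i\<le>k - card T. (card D - card T) choose i)"
    using assms fin_T by (simp add: card_subsets_card_le card_Diff_subset)
  finally show ?thesis .
qed

lemma mult_power_le_binomial:
  fixes c m t n :: nat
  assumes "0 < m" "m \<le> n - t" "2 * t \<le> n" "c * (2 * m) ^ m \<le> n"
  shows "c * n ^ (m - 1) \<le> (n - t) choose m"
proof -
  have "real c * (2 * m) ^ m \<le> n"
    using assms(4) by (metis of_nat_le_iff of_nat_mult of_nat_numeral of_nat_power)
  then have "real c \<le> n / (2 * m) ^ m"
    using assms(1) by (simp add: field_simps)
  then have "real c * n ^ (m - 1) \<le> n / (2 * m) ^ m * n ^ (m - 1)"
    by (rule mult_right_mono) simp
  also have "\<dots> = (n / (2 * m)) ^ m"
    using assms(1) by (cases m) (auto simp: power_divide field_simps)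
  also have "\<dots> \<le> ((n - t) / m) ^ m"
    using assms(1,3) by (intro power_mono) (auto simp: field_simps of_nat_diff)
  also have "\<dots> \<le> (n - t) choose m"
    using binomial_ge_n_over_k_pow_k[OF assms(2)] by simp
  finally show ?thesis by (simp only: of_nat_le_iff flip: of_nat_mult of_nat_power)
qed

lemma card_le_if_subset_insert_cover:
  assumes "\<And>T. T \<in> \<T> \<Longrightarrow> finite (X T) \<and> card (X T) \<le> b"
    and "\<C> \<subseteq> (\<Union>T\<in>\<T>. \<Union>x\<in>X T. (\<lambda>S. S \<union> insert x T) ` {S. S \<subseteq> D \<and> card S = m})"
    and "finite \<T>" "finite D"
  shows "card \<C> \<le> card \<T> * b * card D ^ m"
proof -
  have image_le: "card ((\<lambda>S. S \<union> insert x T) ` {S. S \<subseteq> D \<and> card S = m}) \<le> card D ^ m" for x T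
  proof -
    have "card ((\<lambda>S. S \<union> insert x T) ` {S. S \<subseteq> D \<and> card S = m}) \<le> card {S. S \<subseteq> D \<and> card S = m}"
      using assms(4) by (intro card_image_le) simp
    also have "\<dots> = card D choose m"
      by (rule n_subsets[OF assms(4)])
    also have "\<dots> \<le> card D ^ m"
      by (rule binomial_le_power)
    finally show ?thesis .
  qed
  have inner_le: "card (\<Union>x\<in>X T. (\<lambda>S. S \<union> insert x T) ` {S. S \<subseteq> D \<and> card S = m}) \<le> b * card D ^ m"
    if "T \<in> \<T>" for T
  proof -
    have "card (\<Union>x\<in>X T. (\<lambda>S. S \<union> insert x T) ` {S. S \<subseteq> D \<and> card S = m})
        \<le> card (X T) * card D ^ m"
      using assms(1)[OF that] by (intro card_UN_le_card_mult image_le) simp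
    also have "\<dots> \<le> b * card D ^ m"
      using assms(1)[OF that] by (intro mult_le_mono1) simp
    finally show ?thesis .
  qed
  have "card \<C> \<le> card (\<Union>T\<in>\<T>. \<Union>x\<in>X T. (\<lambda>S. S \<union> insert x T) ` {S. S \<subseteq> D \<and> card S = m})"
    using assms by (intro card_mono) auto
  also have "\<dots> \<le> card \<T> * (b * card D ^ m)"
    by (rule card_UN_le_card_mult[OF assms(3) inner_le])
  finally show ?thesis
    by (simp add: mult.assoc)
qed

text \<open>Chosen so that \<open>C(n - t, m) \<ge> ((n - t) / m)\<^sup>m \<ge> (n / (2 m))\<^sup>m\<close> with \<open>m = k - t\<close> beats the
non-star bound \<open>(k + 1) 2\<^sup>k k n\<^sup>m\<^sup>-\<^sup>1\<close> for every \<open>k \<le> K\<close>.\<close>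

definition threshold :: "nat \<Rightarrow> nat \<Rightarrow> nat" where
  "threshold K t = 2 * t + (K + 1) * 2 ^ K * K * (2 * K) ^ K"

lemma threshold_le_imp_bounds:
  assumes "t < k" "k \<le> K" "threshold K t \<le> n"
  shows "k \<le> n" "(k + 1) * 2 ^ k * k * n ^ (k - t - 1) \<le> (n - t) choose (k - t)"
proof -
  define m c where "m = k - t" and "c = (k + 1) * 2 ^ k * k"
  have "0 < m" "m \<le> K"
    using assms(1,2) by (simp_all add: m_def)
  have "(2 * m) ^ m \<le> (2 * K) ^ m"
    using \<open>m \<le> K\<close> by (intro power_mono) simp_all
  also have "\<dots> \<le> (2 * K) ^ K"
    using \<open>m \<le> K\<close> \<open>0 < m\<close> by (intro power_increasing) simp_all
  finally have "(2 * m) ^ m \<le> (2 * K) ^ K" .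
  have "c \<le> (K + 1) * 2 ^ K * K"
    unfolding c_def using assms(2) by (intro mult_le_mono power_increasing) simp_all
  then have "c * (2 * m) ^ m \<le> (K + 1) * 2 ^ K * K * (2 * K) ^ K"
    using \<open>(2 * m) ^ m \<le> (2 * K) ^ K\<close> by (rule mult_le_mono)
  then have big: "c * (2 * m) ^ m \<le> n" and "2 * t \<le> n"
    using assms(3) by (simp_all add: threshold_def)
  have "0 < (k + 1) * 2 ^ k"
    by simp
  then have "k \<le> c"
    unfolding c_def using mult_le_mono1[of 1 "(k + 1) * 2 ^ k" k] by linarith
  also have "\<dots> \<le> c * (2 * m) ^ m"
    using \<open>0 < m\<close> by simp
  also note big
  finally show "k \<le> n" .
  then have "m \<le> n - t"
    by (simp add: m_def)
  from mult_power_le_binomial[OF \<open>0 < m\<close> this \<open>2 * t \<le> n\<close> big]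
  show "(k + 1) * 2 ^ k * k * n ^ (k - t - 1) \<le> (n - t) choose (k - t)"
    by (simp add: m_def c_def)
qed

locale symdiff_family =
  fixes D :: "'a set" and F :: "'a set set" and k t :: nat
  assumes finite_ground: "finite D"
    and family_subset_Pow: "F \<subseteq> Pow D"
    and card_member_le: "A \<in> F \<Longrightarrow> card A \<le> k"
    and card_symdiff_le: "A \<in> F \<Longrightarrow> B \<in> F \<Longrightarrow> card (A \<inter> B) < t \<Longrightarrow> card (symdiff A B) \<le> k - t"
begin

lemma finite_member: "A \<in> F \<Longrightarrow> finite A"
  using family_subset_Pow finite_ground finite_subset by blast

lemma finite_family: "finite F"
  using family_subset_Pow finite_ground by (meson finite_Pow_iff finite_subset)

lemma card_family_le_one_if_le_t:
  assumes "k \<le> t"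
  shows "card F \<le> 1"
proof -
  have "A = B" if "A \<in> F" "B \<in> F" for A B
  proof (cases "card (A \<inter> B) < t")
    case True
    then have "card (symdiff A B) = 0"
      using card_symdiff_le that assms by fastforce
    then show ?thesis
      using that finite_member unfolding symdiff_def by auto
  next
    case False
    then have "card A \<le> card (A \<inter> B)" "card B \<le> card (A \<inter> B)"
      using card_member_le that assms by (meson le_trans not_less)+
    then show ?thesis
      using finite_member that by (metis Int_lower1 Int_lower2 card_seteq finite_Int)
  qed
  then show ?thesis
    using finite_family by (simp add: card_le_Suc0_iff_eq)
qed

lemma card_family_le_if_common_subset:
  assumes "card T = t" "t \<le> k" "\<And>X. X \<in> F \<Longrightarrow> T \<subseteq> X"
  shows "card F \<le> (\<Sum>j=0..k - t. (card D - t) choose (k - t - j))"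
proof (cases "F = {}")
  case False
  then have "T \<subseteq> D"
    using assms(3) family_subset_Pow by blast
  have "F \<subseteq> {X. T \<subseteq> X \<and> X \<subseteq> D \<and> card X \<le> k}"
    using assms(3) family_subset_Pow card_member_le by blast
  then have "card F \<le> card {X. T \<subseteq> X \<and> X \<subseteq> D \<and> card X \<le> k}"
    using finite_ground by (intro card_mono) auto
  also have "\<dots> = (\<Sum>i=0..k - t. (card D - t) choose i)"
    using card_supersets_card_le[OF finite_ground \<open>T \<subseteq> D\<close>] assms(1,2) by (simp add: atMost_atLeast0)
  also have "\<dots> = (\<Sum>j=0..k - t. (card D - t) choose (k - t - j))"
    by (subst sum.atLeastAtMost_rev) simp
  finally show ?thesis .
qed simp

lemma t_le_card_Int_if_card_eq:
  assumes "A \<in> F" "C \<in> F" "card A = k" "card C = k" "t \<le> k"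
  shows "t \<le> card (A \<inter> C)"
proof (rule ccontr)
  assume small: "\<not> t \<le> card (A \<inter> C)"
  then have "card (symdiff A C) \<le> k - t"
    using card_symdiff_le assms(1,2) by simp
  moreover have "card (symdiff A C) + 2 * card (A \<inter> C) = k + k"
    using card_symdiff_add_card_Int[OF finite_member finite_member, OF assms(1,2)] assms(3,4)
    by simp
  ultimately show False
    using small assms(5) by linarith
qed

lemma meets_Diff_if_not_subset:
  assumes "C \<in> F" "B \<in> F" "card C = k" "T \<subseteq> C" "card T = t" "\<not> T \<subseteq> B"
  shows "C \<inter> (B - T) \<noteq> {}"
proof
  assume "C \<inter> (B - T) = {}"
  then have CB: "C \<inter> B = T \<inter> B"
    using assms(4) by blast
  have fin_T: "finite T"
    using assms(1,4) finite_member finite_subset by blast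
  have "t \<le> k"
    using assms(1,3-5) finite_member card_mono by metis
  have "T \<inter> B \<subset> T"
    using assms(6) by blast
  then have small: "card (C \<inter> B) < t"
    using CB assms(5) fin_T psubset_card_mono by metis
  then have "card (symdiff C B) \<le> k - t"
    using card_symdiff_le assms(1,2) by simp
  moreover have "card (symdiff C B) + 2 * card (C \<inter> B) = k + card B"
    using card_symdiff_add_card_Int[OF finite_member finite_member, OF assms(1,2)] assms(3)
    by simp
  moreover have "card (C \<inter> B) \<le> card B"
    using finite_member assms(2) by (simp add: card_mono)
  ultimately show False
    using small \<open>t \<le> k\<close> by linarith
qed

text \<open>Members \<open>C\<close> of size \<open>k\<close> meet a fixed one \<open>A\<close> in a \<open>t\<close>-set \<open>T\<close>; the member \<open>B T\<close>
avoiding \<open>T\<close> must meet \<open>C\<close> outside \<open>T\<close>, so \<open>C\<close> is determined by \<open>T\<close>, a point of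
\<open>B T - T\<close> and \<open>k - t - 1\<close> further points.\<close>

lemma full_level_subset_cover:
  assumes "A \<in> F" "card A = k" "t \<le> k"
    and avoids: "\<And>T. card T = t \<Longrightarrow> B T \<in> F \<and> \<not> T \<subseteq> B T"
  shows "{C\<in>F. card C = k} \<subseteq> (\<Union>T\<in>{T. T \<subseteq> A \<and> card T = t}. \<Union>x\<in>B T - T.
           (\<lambda>S. S \<union> insert x T) ` {S. S \<subseteq> D \<and> card S = k - t - 1})"
proof
  fix C assume "C \<in> {C\<in>F. card C = k}"
  then have C: "C \<in> F" "card C = k"
    by simp_all
  have "t \<le> card (C \<inter> A)"
    using t_le_card_Int_if_card_eq[OF C(1) assms(1) C(2) assms(2,3)] .
  then obtain T where T: "T \<subseteq> C \<inter> A" "card T = t"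
    by (meson obtain_subset_with_card_n)
  have "C \<inter> (B T - T) \<noteq> {}"
    using avoids[OF T(2)] T by (intro meets_Diff_if_not_subset[OF C(1) _ C(2)]) auto
  then obtain x where x: "x \<in> C" "x \<in> B T - T"
    by blast
  have "insert x T \<subseteq> C"
    using x T by blast
  moreover have "finite T"
    using T(1) finite_member[OF C(1)] finite_subset by blast
  moreover have "card (insert x T) = t + 1"
    using \<open>finite T\<close> T(2) x(2) by simp
  ultimately have "card (C - insert x T) = k - t - 1"
    using card_Diff_subset[of "insert x T" C] C(2) by simp
  moreover have "C - insert x T \<subseteq> D"
    using family_subset_Pow C(1) by blast
  moreover have "C = (C - insert x T) \<union> insert x T"
    using \<open>insert x T \<subseteq> C\<close> by blast
  ultimately show "C \<in> (\<Union>T\<in>{T. T \<subseteq> A \<and> card T = t}. \<Union>x\<in>B T - T.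
      (\<lambda>S. S \<union> insert x T) ` {S. S \<subseteq> D \<and> card S = k - t - 1})"
    using T x by blast
qed

lemma card_full_level_le:
  assumes "t \<le> k" and no_common_subset: "\<And>T. card T = t \<Longrightarrow> \<exists>B\<in>F. \<not> T \<subseteq> B"
  shows "card {C\<in>F. card C = k} \<le> 2 ^ k * k * card D ^ (k - t - 1)"
proof (cases "\<exists>A\<in>F. card A = k")
  case True
  then obtain A where A: "A \<in> F" "card A = k"
    by blast
  obtain B where B: "\<And>T. card T = t \<Longrightarrow> B T \<in> F \<and> \<not> T \<subseteq> B T"
    using no_common_subset by metis
  define \<T> where "\<T> = {T. T \<subseteq> A \<and> card T = t}"
  have "finite \<T>"
    unfolding \<T>_def using finite_member[OF A(1)] by simp
  have "card \<T> \<le> 2 ^ k"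
    unfolding \<T>_def using n_subsets[OF finite_member[OF A(1)]] A(2) binomial_le_pow2 by simp
  have "finite (B T - T) \<and> card (B T - T) \<le> k" if "T \<in> \<T>" for T
  proof -
    have "B T \<in> F"
      using B that by (simp add: \<T>_def)
    then show ?thesis
      using card_mono[OF finite_member[OF \<open>B T \<in> F\<close>] Diff_subset, of T]
        card_member_le[OF \<open>B T \<in> F\<close>] finite_member[OF \<open>B T \<in> F\<close>] by simp
  qed
  then have "card {C\<in>F. card C = k} \<le> card \<T> * k * card D ^ (k - t - 1)"
    using full_level_subset_cover[OF A assms(1) B] \<open>finite \<T>\<close> finite_ground
    unfolding \<T>_def[symmetric] by (rule card_le_if_subset_insert_cover)
  also have "\<dots> \<le> 2 ^ k * k * card D ^ (k - t - 1)"
    using \<open>card \<T> \<le> 2 ^ k\<close> by (intro mult_le_mono1)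
  finally show ?thesis .
next
  case False
  then have "{C\<in>F. card C = k} = {}"
    by blast
  then show ?thesis
    by (metis card.empty zero_le)
qed

lemma card_Diff_le_if_card_eq:
  assumes "A \<in> F" "B \<in> F" "card A = s" "card B = s" "s < k"
  shows "card (B - A) \<le> k - t - 1"
proof -
  have sum_symdiff: "card (symdiff A B) + 2 * card (A \<inter> B) = s + s"
    using card_symdiff_add_card_Int[OF finite_member finite_member, OF assms(1,2)] assms(3,4)
    by simp
  have "card (A \<inter> B) \<le> s"
    using card_mono[OF finite_member[OF assms(2)] Int_lower2] assms(4) by simp
  then have sum_Diff: "card (B - A) + card (A \<inter> B) = s"
    using card_Diff_subset_Int[of B A] finite_member[OF assms(2)] assms(4)
    by (simp add: Int_commute)
  show ?thesis
  proof (cases "t \<le> card (A \<inter> B)")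
    case True
    then show ?thesis
      using sum_Diff assms(5) by linarith
  next
    case False
    then have "card (symdiff A B) \<le> k - t"
      using card_symdiff_le assms(1,2) by simp
    then show ?thesis
      using sum_symdiff sum_Diff by linarith
  qed
qed

lemma card_level_le_if_less:
  assumes "s < k" "D \<noteq> {}"
  shows "card {C\<in>F. card C = s} \<le> 2 ^ k * k * card D ^ (k - t - 1)"
proof (cases "\<exists>A\<in>F. card A = s")
  case True
  then obtain A where A: "A \<in> F" "card A = s"
    by blast
  define \<Q> where "\<Q> = {Q. Q \<subseteq> D \<and> card Q \<le> k - t - 1}"
  have cover: "{C\<in>F. card C = s} \<subseteq> (\<lambda>(P, Q). P \<union> Q) ` (Pow A \<times> \<Q>)"
  proof
    fix C assume C: "C \<in> {C\<in>F. card C = s}"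
    then have "C = (A \<inter> C) \<union> (C - A)" "C - A \<in> \<Q>"
      using card_Diff_le_if_card_eq[OF A(1) _ A(2) _ assms(1)] family_subset_Pow
      by (auto simp: \<Q>_def)
    then show "C \<in> (\<lambda>(P, Q). P \<union> Q) ` (Pow A \<times> \<Q>)"
      by blast
  qed
  have "card \<Q> \<le> (k - t - 1 + 1) * card D ^ (k - t - 1)"
    unfolding \<Q>_def card_subsets_card_le[OF finite_ground]
    using assms(2) finite_ground by (intro sum_binomial_le_power) (simp add: Suc_leI card_gt_0_iff)
  also have "\<dots> \<le> k * card D ^ (k - t - 1)"
    using assms(1) by (intro mult_le_mono1) linarith
  finally have card_\<Q>: "card \<Q> \<le> k * card D ^ (k - t - 1)" .
  have "card {C\<in>F. card C = s} \<le> card ((\<lambda>(P, Q). P \<union> Q) ` (Pow A \<times> \<Q>))"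
    using finite_member[OF A(1)] finite_ground by (intro card_mono[OF _ cover]) (simp add: \<Q>_def)
  also have "\<dots> \<le> card (Pow A \<times> \<Q>)"
    by (rule card_image_le) (simp add: finite_member[OF A(1)] \<Q>_def finite_ground)
  also have "\<dots> = 2 ^ s * card \<Q>"
    using finite_member[OF A(1)] A(2) by (simp add: card_cartesian_product card_Pow)
  also have "\<dots> \<le> 2 ^ k * (k * card D ^ (k - t - 1))"
    using assms(1) card_\<Q> by (intro mult_le_mono power_increasing) auto
  finally show ?thesis
    by (simp add: mult.assoc)
next
  case False
  then have "{C\<in>F. card C = s} = {}"
    by blast
  then show ?thesis
    by (metis card.empty zero_le)
qed

lemma card_family_le_if_no_common_subset:
  assumes "t \<le> k" "D \<noteq> {}" and no_common_subset: "\<And>T. card T = t \<Longrightarrow> \<exists>B\<in>F. \<not> T \<subseteq> B"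
  shows "card F \<le> (k + 1) * 2 ^ k * k * card D ^ (k - t - 1)"
proof -
  have "F = (\<Union>s\<le>k. {C\<in>F. card C = s})"
    using card_member_le by auto
  also have "card \<dots> \<le> card {..k} * (2 ^ k * k * card D ^ (k - t - 1))"
  proof (rule card_UN_le_card_mult)
    fix s assume "s \<in> {..k}"
    then consider "s = k" | "s < k"
      by fastforce
    then show "card {C\<in>F. card C = s} \<le> 2 ^ k * k * card D ^ (k - t - 1)"
    proof cases
      case 1
      then show ?thesis
        using card_full_level_le[OF assms(1) no_common_subset] by simp
    next
      case 2
      then show ?thesis
        by (rule card_level_le_if_less[OF _ assms(2)])
    qed
  qed simp
  finally show ?thesis
    by (simp add: algebra_simps)
qed

theorem card_family_le_sum_binomial:
  assumes "k \<le> K" "threshold K t \<le> card D"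
  shows "card F \<le> (\<Sum>j=0..k - t. (card D - t) choose (k - t - j))"
proof (cases "k \<le> t")
  case True
  then show ?thesis
    using card_family_le_one_if_le_t by simp
next
  case False
  have "D \<noteq> {}"
    using threshold_le_imp_bounds(1)[OF _ assms] False finite_ground by auto
  show ?thesis
  proof (cases "\<exists>T. card T = t \<and> (\<forall>X\<in>F. T \<subseteq> X)")
    case True
    then obtain T where "card T = t" "\<forall>X\<in>F. T \<subseteq> X"
      by blast
    then show ?thesis
      using card_family_le_if_common_subset False by simp
  next
    case no_common_subset: False
    have "card F \<le> (k + 1) * 2 ^ k * k * card D ^ (k - t - 1)"
      using card_family_le_if_no_common_subset \<open>D \<noteq> {}\<close> no_common_subset False by simp
    also have "\<dots> \<le> (card D - t) choose (k - t)"
      using threshold_le_imp_bounds(2)[OF _ assms] False by simp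
    also have "\<dots> \<le> (\<Sum>j=0..k - t. (card D - t) choose (k - t - j))"
      using member_le_sum[of 0 "{0..k - t}" "\<lambda>j. (card D - t) choose (k - t - j)"] by simp
    finally show ?thesis .
  qed
qed

end

theorem theorem1p4:
  "\<exists>n0 :: nat \<Rightarrow> nat \<Rightarrow> nat \<Rightarrow> nat.
     \<forall>(r::nat) (k::nat \<Rightarrow> nat) (t::nat) (n::nat) (F::nat \<Rightarrow> nat set set).
       r \<ge> 2 \<longrightarrow> 1 \<le> t \<longrightarrow> t \<le> k 1 \<longrightarrow>
       (\<forall>i\<in>{1..<r}. k i \<le> k (Suc i)) \<longrightarrow>
       k r \<le> n \<longrightarrow> n \<ge> n0 (k (r - 1)) (k r) t \<longrightarrow>
       (\<forall>i\<in>{1..r}. F i \<subseteq> Pow {1..n}) \<longrightarrow>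
       (\<forall>i\<in>{1..r}. \<forall>A\<in>F i. card A \<le> k i) \<longrightarrow>
       (\<forall>i\<in>{1..r}. \<forall>j\<in>{1..r}. \<forall>A\<in>F i. \<forall>B\<in>F j.
          card (A \<inter> B) < t \<longrightarrow> card (symdiff A B) \<le> min (k i) (k j) - t) \<longrightarrow>
       (\<Prod>i=1..r. card (F i)) \<le>
         (\<Prod>i=1..r. \<Sum>j=0..k i - t. (n - t) choose (k i - t - j))"
  \<comment> \<open>\<open>n0\<close> ignores \<open>k\<^sub>r\<^sub>-\<^sub>1\<close>.\<close>
proof (intro exI[of _ "\<lambda>_ K t. threshold K t"] allI impI)
  fix r t n :: nat and k :: "nat \<Rightarrow> nat" and F :: "nat \<Rightarrow> nat set set"
  assume mono: "\<forall>i\<in>{1..<r}. k i \<le> k (Suc i)"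
    and large: "threshold (k r) t \<le> n"
    and subset: "\<forall>i\<in>{1..r}. F i \<subseteq> Pow {1..n}"
    and card_le: "\<forall>i\<in>{1..r}. \<forall>A\<in>F i. card A \<le> k i"
    and symdiff_le: "\<forall>i\<in>{1..r}. \<forall>j\<in>{1..r}. \<forall>A\<in>F i. \<forall>B\<in>F j.
          card (A \<inter> B) < t \<longrightarrow> card (symdiff A B) \<le> min (k i) (k j) - t"
  have "card (F i) \<le> (\<Sum>j=0..k i - t. (n - t) choose (k i - t - j))" if i: "i \<in> {1..r}" for i
  proof -
    interpret symdiff_family "{1..n}" "F i" "k i" t
    proof
      show "F i \<subseteq> Pow {1..n}"
        using subset i by blast
      show "card A \<le> k i" if "A \<in> F i" for A
        using card_le[rule_format, OF i that] .
      show "card (symdiff A B) \<le> k i - t" if "A \<in> F i" "B \<in> F i" "card (A \<inter> B) < t" for A B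
        using symdiff_le[rule_format, OF i i that] by simp
    qed simp
    have "k i \<le> k r"
      by (rule lift_Suc_mono_le_ivl[of "{1..<r}"]) (use i mono in auto)
    then show ?thesis
      using card_family_le_sum_binomial[of "k r"] large by simp
  qed
  then show "(\<Prod>i=1..r. card (F i)) \<le> (\<Prod>i=1..r. \<Sum>j=0..k i - t. (n - t) choose (k i - t - j))"
    by (intro prod_mono) simp
qed

end
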